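(* Let $a>0$ and let $L_2=a\mathbb{Z}^3\cup a(\mathbb{Z}+\tfrac12)^3\cup W$. For every $w\in W$, the Voronoi cell of $w$ with respect to $L_2$ has volume $$V^{(2)}_W=\frac{451}{6912}a^3 .$$ Consequently $2V^{(2)}_\Gamma+12V^{(2)}_W=a^3$, where $V^{(2)}_\Gamma=\tfrac{125}{1152}a^3$ is the volume of the Voronoi cell of a point of $a\mathbb{Z}^3\cup a(\mathbb{Z}+\tfrac12)^3$ with respect to $L_2$.
   Context: Fix $a>0$. $W\subset\mathbb{R}^3$ is the set of all points $a(u_1,u_2,u_3)$ such that $(u_1,u_2,u_3)$ is a permutation of a triple $(i,\ j+\tfrac12,\ k+\varepsilon)$ with $i,j,k\in\mathbb{Z}$ and $\varepsilon\in\{\tfrac14,\tfrac34\}$. For a discrete set $P\subset\mathbb{R}^3$ and $p\in P$, the Voronoi cell of $p$ with respect to $P$ is $\{x\in\mathbb{R}^3: |x-p|\le|x-q|\ \text{for all } q\in P\}$. *)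

theory Defs
  imports "HOL-Analysis.Analysis"
begin

definition voronoi_cell :: "'a::metric_space set \<Rightarrow> 'a \<Rightarrow> 'a set" where
  "voronoi_cell P p = {x. \<forall>q\<in>P. dist x p \<le> dist x q}"

definition W_triples :: "(real^3) set" where
  "W_triples = {vector [of_int i, of_int j + 1/2, of_int k + e] | i j k e.
                 e \<in> {1/4, 3/4 :: real}}"

definition W_set :: "real \<Rightarrow> (real^3) set" where
  "W_set a = {a *\<^sub>R (\<chi> i. t $ p i) | t p. t \<in> W_triples \<and> p permutes (UNIV :: 3 set)}"

definition Gamma_set :: "real \<Rightarrow> (real^3) set" where
  "Gamma_set a = {a *\<^sub>R (\<chi> i. of_int (f i)) | f. True}
               \<union> {a *\<^sub>R (\<chi> i. of_int (f i) + 1/2) | f. True}"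

definition L2_set :: "real \<Rightarrow> (real^3) set" where
  "L2_set a = Gamma_set a \<union> W_set a"

end

theory Submission
  imports Defs
begin

(* Scaled by 1/a, the point set becomes L2_unit, and every point of W is the image of
   w0 = (0,1/2,1/4) under a symmetry of L2_unit: y \<mapsto> c \<plusminus> y with c integral, followed by a
   permutation of the coordinates (the sign is needed for points like (0,1,1) - w0 = (0,1/2,3/4)).
   Hence every W-cell is an isometric copy of the cell of w0 scaled by a.

   The bisector planes of w0 and its four nearest W-neighbours
   (\<plusminus>1/4,1/2,0), (0,1/4,1/2), (0,3/4,1/2) bound the tetrahedron spanned by the Gamma-points
   0, (0,1,0), (\<plusminus>1/2,1/2,1/2), of volume 1/12, and the bisector planes of w0 and these four
   Gamma-points cut off four corner tetrahedra of volume 125/27648 each, leaving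
   1/12 - 4 * 125/27648 = 451/6912. That no other lattice point cuts W_cell is a finite check:
   once it is fixed which coordinates of a competitor q are integers, half-odd integers and odd
   multiples of 1/4, q can be moved coordinatewise into a small box around W_cell without
   increasing its distance to any point of W_cell. *)

lemma dist_le_dist_iff_inner:
  fixes x p q :: "'a::real_inner"
  shows "dist x p \<le> dist x q \<longleftrightarrow> 2 * (x \<bullet> (q - p)) \<le> q \<bullet> q - p \<bullet> p"
proof -
  have "dist x p \<le> dist x q \<longleftrightarrow> (x - p) \<bullet> (x - p) \<le> (x - q) \<bullet> (x - q)"
    by (simp add: dist_norm norm_le)
  also have "\<dots> \<longleftrightarrow> 2 * (x \<bullet> (q - p)) \<le> q \<bullet> q - p \<bullet> p"
    by (simp add: inner_diff inner_commute algebra_simps)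
  finally show ?thesis .
qed

lemma coset_clamp:
  fixes s d z :: real and lo hi n :: int
  assumes s: "0 < s" and lo: "(d + lo) / s \<le> z" and hi: "z \<le> (d + hi) / s"
  obtains m where "lo \<le> m" "m \<le> hi" "\<bar>z - (d + m) / s\<bar> \<le> \<bar>z - (d + n) / s\<bar>"
proof -
  have mono: "(d + k) / s \<le> (d + l) / s" if "k \<le> l" for k l :: int
    using that s by (simp add: divide_right_mono)
  have "(d + lo) / s \<le> (d + hi) / s" using lo hi by linarith
  then have "lo \<le> hi" using s by (simp add: divide_le_cancel)
  consider "n < lo" | "lo \<le> n" "n \<le> hi" | "hi < n" by linarith
  then show ?thesis
  proof cases
    case 1
    with lo mono[of n lo] show ?thesis using that[of lo] \<open>lo \<le> hi\<close> by simp
  next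
    case 2
    then show ?thesis using that by blast
  next
    case 3
    with hi mono[of hi n] show ?thesis using that[of hi] \<open>lo \<le> hi\<close> by simp
  qed
qed

lemma dist_le_by_box_candidates:
  fixes x p q s d :: "real^'n" and lo hi :: "int^'n"
  assumes s: "\<forall>i. 0 < s$i"
    and q: "\<forall>i. s$i * q$i - d$i \<in> \<int>"
    and x: "\<forall>i. (d$i + lo$i) / s$i \<le> x$i \<and> x$i \<le> (d$i + hi$i) / s$i"
    and candidates: "\<forall>m. (\<forall>i. m$i \<in> {lo$i..hi$i}) \<longrightarrow> dist x p \<le> dist x (\<chi> i. (d$i + m$i) / s$i)"
  shows "dist x p \<le> dist x q"
proof -
  have "\<exists>m. lo$i \<le> m \<and> m \<le> hi$i \<and> \<bar>x$i - (d$i + m) / s$i\<bar> \<le> \<bar>x$i - q$i\<bar>" for i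
  proof -
    obtain n where "s$i * q$i - d$i = of_int n" using q by (auto elim: Ints_cases)
    then have "q$i = (d$i + n) / s$i" using s[rule_format, of i] by (simp add: field_simps)
    with x coset_clamp[OF s[rule_format] x[rule_format, THEN conjunct1] x[rule_format, THEN conjunct2]]
    show ?thesis by metis
  qed
  then obtain m where m: "\<forall>i. lo$i \<le> m$i \<and> m$i \<le> hi$i"
    and closer: "\<forall>i. \<bar>x$i - (d$i + m$i) / s$i\<bar> \<le> \<bar>x$i - q$i\<bar>"
    by (metis vec_lambda_beta)
  have "dist x (\<chi> i. (d$i + m$i) / s$i) \<le> dist x q"
    unfolding dist_vec_def by (rule L2_set_mono) (simp_all add: dist_real_def closer)
  with candidates m show ?thesis by fastforce
qed

lemma std_simplex_cart:
  "convex hull (insert 0 Basis) = {x::real^'n. (\<forall>i. 0 \<le> x$i) \<and> sum (($) x) UNIV \<le> 1}"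
proof -
  have Basis: "(Basis :: (real^'n) set) = range (\<lambda>i. axis i 1)"
    by (auto simp: Basis_vec_def)
  have "inj (\<lambda>i::'n. axis i (1::real))" by (simp add: inj_on_def axis_eq_axis)
  then have "{x. (\<forall>i\<in>Basis. 0 \<le> x \<bullet> i) \<and> sum ((\<bullet>) x) Basis \<le> 1} =
      {x::real^'n. (\<forall>i. 0 \<le> x$i) \<and> sum (($) x) UNIV \<le> 1}"
    unfolding Basis by (simp add: sum.reindex inner_axis comp_def)
  then show ?thesis by (simp only: std_simplex)
qed

lemma measure_std_simplex_affine_preimage:
  fixes A :: "real^'n::{finite,wellorder}^'n::{finite,wellorder}" and b :: "real^'n::{finite,wellorder}"
  assumes "det A \<noteq> 0"
  defines "S \<equiv> {x. A *v x + b \<in> convex hull (insert 0 Basis)}"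
  shows "S \<in> lmeasurable" "measure lebesgue S = 1 / (fact CARD('n) * \<bar>det A\<bar>)"
proof -
  let ?\<Delta> = "convex hull (insert 0 Basis) :: (real^'n::{finite,wellorder}) set"
  obtain B where AB: "A ** B = mat 1" and BA: "B ** A = mat 1"
    using assms invertible_det_nz unfolding invertible_def by blast
  have \<Delta>: "compact ?\<Delta>" by (intro finite_imp_compact_convex_hull) auto
  have S_eq: "S = (\<lambda>y. B *v y) ` ((\<lambda>y. y - b) ` ?\<Delta>)"
  proof (intro set_eqI iffI)
    fix x assume "x \<in> S"
    then show "x \<in> (\<lambda>y. B *v y) ` ((\<lambda>y. y - b) ` ?\<Delta>)"
      by (intro image_eqI[of _ _ "A *v x"] image_eqI[of _ _ "A *v x + b"])
         (simp_all add: S_def matrix_vector_mul_assoc BA)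
  next
    fix x assume "x \<in> (\<lambda>y. B *v y) ` ((\<lambda>y. y - b) ` ?\<Delta>)"
    then show "x \<in> S" by (auto simp: S_def matrix_vector_mul_assoc AB)
  qed
  have "(\<lambda>y. y - b) ` ?\<Delta> \<in> lmeasurable"
    using \<Delta> by (intro lmeasurable_compact compact_translation_subtract)
  then show "S \<in> lmeasurable" unfolding S_eq by (rule measurable_linear_image[OF matrix_vector_mul_linear])
  have "\<bar>det A\<bar> * \<bar>det B\<bar> = 1" by (metis AB abs_mult abs_one det_I det_mul)
  then have "\<bar>det B\<bar> = 1 / \<bar>det A\<bar>" using assms by (simp add: field_simps)
  moreover have "measure lebesgue ?\<Delta> = 1 / fact CARD('n)"
    using content_std_simplex[where 'a="real^'n::{finite,wellorder}"] \<Delta> by (simp add: measure_completion compact_imp_closed)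
  ultimately show "measure lebesgue S = 1 / (fact CARD('n) * \<bar>det A\<bar>)"
    unfolding S_eq using \<open>(\<lambda>y. y - b) ` ?\<Delta> \<in> lmeasurable\<close>
    by (simp add: measure_linear_image[OF matrix_vector_mul_linear] measure_translation_subtract)
qed

lemma measure_tetrahedron_3:
  fixes A :: "real^3^3"
  assumes "S = {x. A *v x + b \<in> convex hull (insert 0 Basis)}" and "det A \<noteq> 0"
  shows "S \<in> lmeasurable \<and> measure lebesgue S = 1 / (6 * \<bar>det A\<bar>)"
  using measure_std_simplex_affine_preimage[OF assms(2), of b] assms(1) by (simp add: fact_numeral)

lemma orthogonal_transformation_permute_coordinates:
  assumes "p permutes (UNIV :: 'n::finite set)"
  shows "orthogonal_transformation (\<lambda>u::real^'n. \<chi> i. u $ p i)"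
  unfolding orthogonal_transformation_def
proof (intro conjI allI)
  show "linear (\<lambda>u::real^'n. \<chi> i. u $ p i)"
    by (intro linearI) (simp_all add: vec_eq_iff)
  fix v w :: "real^'n"
  show "(\<chi> i. v $ p i) \<bullet> (\<chi> i. w $ p i) = v \<bullet> w"
    using sum.permute[OF assms, of "\<lambda>i. v $ i * w $ i"] by (simp add: inner_vec_def comp_def)
qed

lemma
  fixes g :: "real^'n::{finite,wellorder} \<Rightarrow> real^'n::{finite,wellorder}"
  assumes g: "orthogonal_transformation g" and S: "S \<in> lmeasurable"
  shows measurable_similarity_image: "(\<lambda>y. r *\<^sub>R g y + d) ` S \<in> lmeasurable"
    and measure_similarity_image:
      "measure lebesgue ((\<lambda>y. r *\<^sub>R g y + d) ` S) = \<bar>r\<bar> ^ CARD('n) * measure lebesgue S"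
proof -
  have eq: "(\<lambda>y. r *\<^sub>R g y + d) ` S = (\<lambda>x. r *\<^sub>R x + d) ` (g ` S)" by (simp add: image_image)
  have gS: "g ` S \<in> lmeasurable" by (rule measurable_orthogonal_image[OF g S])
  show "(\<lambda>y. r *\<^sub>R g y + d) ` S \<in> lmeasurable"
  proof -
    have "(\<lambda>x. r *\<^sub>R x) ` (g ` S) \<in> lmeasurable" by (rule measurable_linear_image[OF linear_scaleR gS])
    from measurable_translation[OF this, of d] show ?thesis by (simp add: eq image_image add.commute)
  qed
  show "measure lebesgue ((\<lambda>y. r *\<^sub>R g y + d) ` S) = \<bar>r\<bar> ^ CARD('n) * measure lebesgue S"
    unfolding eq measure_lebesgue_affine measure_orthogonal_image[OF g S] by simp
qed

lemma voronoi_cell_similarity: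
  fixes g :: "'a::euclidean_space \<Rightarrow> 'a"
  assumes g: "orthogonal_transformation g" and r: "r \<noteq> 0"
    and points: "\<And>y. r *\<^sub>R g y + d \<in> Q \<longleftrightarrow> y \<in> P"
  shows "voronoi_cell Q (r *\<^sub>R g p + d) = (\<lambda>y. r *\<^sub>R g y + d) ` voronoi_cell P p"
proof -
  define F where "F y = r *\<^sub>R g y + d" for y
  have F_points: "F y \<in> Q \<longleftrightarrow> y \<in> P" for y
    unfolding F_def by (rule points)
  have F_dist: "dist (F x) (F y) = \<bar>r\<bar> * dist x y" for x y
  proof -
    have "dist (F x) (F y) = \<bar>r\<bar> * norm (g x - g y)"
      by (simp add: F_def dist_norm flip: scaleR_diff_right)
    also have "g x - g y = g (x - y)"
      by (simp add: linear_diff orthogonal_transformation_linear[OF g])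
    finally show ?thesis using g by (simp add: orthogonal_transformation dist_norm)
  qed
  have "surj F"
  proof -
    have "z = F y" if "g y = (z - d) /\<^sub>R r" for y z
      using that r by (simp add: F_def)
    then show ?thesis using orthogonal_transformation_surj[OF g] by (metis surj_def)
  qed
  have "F x \<in> voronoi_cell Q (F p) \<longleftrightarrow> x \<in> voronoi_cell P p" for x
  proof -
    have "F x \<in> voronoi_cell Q (F p) \<longleftrightarrow> (\<forall>y. F y \<in> Q \<longrightarrow> dist (F x) (F p) \<le> dist (F x) (F y))"
      using \<open>surj F\<close> unfolding voronoi_cell_def by (auto simp: surj_def) (metis (no_types))
    also have "\<dots> \<longleftrightarrow> x \<in> voronoi_cell P p"
      using r by (auto simp: F_points F_dist voronoi_cell_def)
    finally show ?thesis .
  qed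
  with \<open>surj F\<close> have "voronoi_cell Q (F p) = F ` voronoi_cell P p"
    by (auto simp: surj_def) (metis image_eqI)
  then show ?thesis by (simp only: F_def[abs_def])
qed

(* L2_set 1, with the W-points described by coordinate types: 2 r - 1/2 \<in> \<int> says r \<in> \<int> + {1/4, 3/4}. *)
definition L2_unit :: "(real^3) set" where
  "L2_unit = {y. (\<forall>i. y$i \<in> \<int>) \<or> (\<forall>i. y$i - 1/2 \<in> \<int>) \<or>
     (\<exists>p. p permutes UNIV \<and> y $ p 1 \<in> \<int> \<and> y $ p 2 - 1/2 \<in> \<int> \<and> 2 * y $ p 3 - 1/2 \<in> \<int>)}"

lemma sign_add_Ints_iff:
  fixes s u m :: real
  assumes "s = 1 \<or> s = -1" "m \<in> \<int>"
  shows "s * u + m \<in> \<int> \<longleftrightarrow> u \<in> \<int>"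
  using assms by auto

lemma L2_unit_reflect_translate:
  assumes s: "s = 1 \<or> s = -1" and c: "\<forall>i. c$i \<in> \<int>"
  shows "s *\<^sub>R y + c \<in> L2_unit \<longleftrightarrow> y \<in> L2_unit"
proof -
  have half: "(s - 1) / 2 \<in> \<int>" using s by auto
  have types: "s * r + n \<in> \<int> \<longleftrightarrow> r \<in> \<int>"
      "s * r + n - 1/2 \<in> \<int> \<longleftrightarrow> r - 1/2 \<in> \<int>"
      "2 * (s * r + n) - 1/2 \<in> \<int> \<longleftrightarrow> 2 * r - 1/2 \<in> \<int>" if n: "n \<in> \<int>" for r n
  proof -
    have half_eq: "s * r + n - 1/2 = s * (r - 1/2) + (n + (s - 1) / 2)"
      and quarter_eq: "2 * (s * r + n) - 1/2 = s * (2 * r - 1/2) + (2 * n + (s - 1) / 2)"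
      by (simp_all add: field_simps)
    show "s * r + n \<in> \<int> \<longleftrightarrow> r \<in> \<int>"
      by (rule sign_add_Ints_iff[OF s n])
    show "s * r + n - 1/2 \<in> \<int> \<longleftrightarrow> r - 1/2 \<in> \<int>"
      unfolding half_eq by (rule sign_add_Ints_iff[OF s]) (use n half in simp)
    show "2 * (s * r + n) - 1/2 \<in> \<int> \<longleftrightarrow> 2 * r - 1/2 \<in> \<int>"
      unfolding quarter_eq by (rule sign_add_Ints_iff[OF s]) (use n half in simp)
  qed
  show ?thesis
    unfolding L2_unit_def mem_Collect_eq vector_add_component vector_scaleR_component real_scaleR_def
    by (simp only: types c[rule_format])
qed

lemma L2_unit_permute_imp:
  assumes p: "p permutes UNIV" and y: "y \<in> L2_unit"
  shows "(\<chi> i. y $ p i) \<in> L2_unit"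
proof -
  have "\<exists>q'. q' permutes UNIV \<and> y $ p (q' 1) \<in> \<int> \<and> y $ p (q' 2) - 1/2 \<in> \<int> \<and> 2 * y $ p (q' 3) - 1/2 \<in> \<int>"
    if "q permutes UNIV" "y $ q 1 \<in> \<int>" "y $ q 2 - 1/2 \<in> \<int>" "2 * y $ q 3 - 1/2 \<in> \<int>" for q
    using that permutes_compose[OF that(1) permutes_inv[OF p]] permutes_inverses(1)[OF p]
    by (intro exI[of _ "inv p \<circ> q"]) simp
  then show ?thesis using y unfolding L2_unit_def by auto
qed

lemma L2_unit_permute:
  assumes p: "p permutes UNIV"
  shows "(\<chi> i. y $ p i) \<in> L2_unit \<longleftrightarrow> y \<in> L2_unit"
proof
  assume "(\<chi> i. y $ p i) \<in> L2_unit"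
  from L2_unit_permute_imp[OF permutes_inv[OF p] this] show "y \<in> L2_unit"
    by (simp add: permutes_inverses(1)[OF p])
qed (rule L2_unit_permute_imp[OF p])

lemma odd_quarter_iff:
  fixes r :: real
  shows "2 * r - 1/2 \<in> \<int> \<longleftrightarrow> (\<exists>k::int. \<exists>e\<in>{1/4, 3/4}. r = of_int k + e)"
proof
  assume "2 * r - 1/2 \<in> \<int>"
  then obtain n :: int where n: "2 * r - 1/2 = n" by (auto elim: Ints_cases)
  show "\<exists>k::int. \<exists>e\<in>{1/4, 3/4}. r = of_int k + e"
  proof (cases "even n")
    case True
    then obtain k where "n = 2 * k" by blast
    with n show ?thesis by (intro exI[of _ k] bexI[of _ "1/4"]) auto
  next
    case False
    then obtain k where "n = 2 * k + 1" by (blast elim: oddE)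
    with n show ?thesis by (intro exI[of _ k] bexI[of _ "3/4"]) auto
  qed
next
  assume "\<exists>k::int. \<exists>e\<in>{1/4, 3/4}. r = of_int k + e"
  then obtain k e where "e \<in> {1/4, 3/4}" "r = of_int k + e" by blast
  then have "2 * r - 1/2 = of_int (2 * k) \<or> 2 * r - 1/2 = of_int (2 * k + 1)" by auto
  then show "2 * r - 1/2 \<in> \<int>" by (metis Ints_of_int)
qed

lemma W_set_iff:
  assumes a: "a > 0"
  shows "q \<in> W_set a \<longleftrightarrow> (\<exists>p. p permutes UNIV \<and> (q /\<^sub>R a) $ p 1 \<in> \<int> \<and>
           (q /\<^sub>R a) $ p 2 - 1/2 \<in> \<int> \<and> 2 * (q /\<^sub>R a) $ p 3 - 1/2 \<in> \<int>)"
    (is "_ \<longleftrightarrow> (\<exists>p. ?types (q /\<^sub>R a) p)")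
proof
  assume "q \<in> W_set a"
  then obtain t p where t: "t \<in> W_triples" and p: "p permutes UNIV" and q: "q = a *\<^sub>R (\<chi> i. t $ p i)"
    unfolding W_set_def by blast
  have "q /\<^sub>R a = (\<chi> i. t $ p i)" using a q by simp
  moreover obtain i j k e where e: "e \<in> {1/4, 3/4}"
    and "t = vector [of_int i, of_int j + 1/2, of_int k + e]"
    using t unfolding W_triples_def by blast
  then have "t $ 1 = of_int i" "t $ 2 = of_int j + 1/2" "t $ 3 = of_int k + e" by simp_all
  then have "t $ 1 \<in> \<int>" "t $ 2 - 1/2 \<in> \<int>" "2 * t $ 3 - 1/2 \<in> \<int>"
    unfolding odd_quarter_iff using e by (simp, simp, blast)
  ultimately have "?types (q /\<^sub>R a) (inv p)"
    using permutes_inv[OF p] by (simp add: permutes_inverses(1)[OF p])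
  then show "\<exists>p. ?types (q /\<^sub>R a) p" by blast
next
  assume "\<exists>p. ?types (q /\<^sub>R a) p"
  then obtain p where p: "?types (q /\<^sub>R a) p" ..
  define t where "t = (\<chi> i. (q /\<^sub>R a) $ p i)"
  have "t \<in> W_triples"
  proof -
    obtain i j :: int where "t $ 1 = i" "t $ 2 - 1/2 = j"
      using p unfolding t_def by (auto elim!: Ints_cases)
    moreover have "2 * t $ 3 - 1/2 \<in> \<int>" using p by (simp add: t_def)
    then obtain k e where "e \<in> {1/4, 3/4}" "t $ 3 = of_int k + e"
      unfolding odd_quarter_iff by blast
    ultimately have "t = vector [of_int i, of_int j + 1/2, of_int k + e]"
      by (simp add: vec_eq_iff forall_3)
    with \<open>e \<in> {1/4, 3/4}\<close> show ?thesis unfolding W_triples_def by blast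
  qed
  moreover have "q = a *\<^sub>R (\<chi> i. t $ inv p i)"
    using a by (simp add: t_def vec_eq_iff permutes_inverses(1)[of p UNIV] p)
  ultimately show "q \<in> W_set a" using permutes_inv p unfolding W_set_def by blast
qed

lemma Gamma_set_iff:
  assumes a: "a > 0"
  shows "q \<in> Gamma_set a \<longleftrightarrow> (\<forall>i. (q /\<^sub>R a) $ i \<in> \<int>) \<or> (\<forall>i. (q /\<^sub>R a) $ i - 1/2 \<in> \<int>)"
proof
  assume "q \<in> Gamma_set a"
  then show "(\<forall>i. (q /\<^sub>R a) $ i \<in> \<int>) \<or> (\<forall>i. (q /\<^sub>R a) $ i - 1/2 \<in> \<int>)"
    using a unfolding Gamma_set_def by (auto simp: mult.assoc[symmetric])
next
  have int_part: "of_int \<lfloor>r\<rfloor> = r" if "r \<in> \<int>" for r :: real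
    using that by (auto elim: Ints_cases)
  assume "(\<forall>i. (q /\<^sub>R a) $ i \<in> \<int>) \<or> (\<forall>i. (q /\<^sub>R a) $ i - 1/2 \<in> \<int>)"
  then show "q \<in> Gamma_set a"
  proof
    assume "\<forall>i. (q /\<^sub>R a) $ i \<in> \<int>"
    then have "q = a *\<^sub>R (\<chi> i. of_int \<lfloor>(q /\<^sub>R a) $ i\<rfloor>)"
      using a by (simp add: vec_eq_iff int_part)
    then show ?thesis unfolding Gamma_set_def by (intro UnI1 CollectI exI[of _ "\<lambda>i. \<lfloor>(q /\<^sub>R a) $ i\<rfloor>"]) simp
  next
    assume "\<forall>i. (q /\<^sub>R a) $ i - 1/2 \<in> \<int>"
    then have "q = a *\<^sub>R (\<chi> i. of_int \<lfloor>(q /\<^sub>R a) $ i - 1/2\<rfloor> + 1/2)"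
      using a by (simp add: vec_eq_iff int_part)
    then show ?thesis unfolding Gamma_set_def by (intro UnI2 CollectI exI[of _ "\<lambda>i. \<lfloor>(q /\<^sub>R a) $ i - 1/2\<rfloor>"]) simp
  qed
qed

lemma L2_set_iff: "a > 0 \<Longrightarrow> q \<in> L2_set a \<longleftrightarrow> q /\<^sub>R a \<in> L2_unit"
  unfolding L2_set_def L2_unit_def Un_iff Gamma_set_iff W_set_iff by blast

definition w0 :: "real^3" where "w0 = vector [0, 1/2, 1/4]"

definition W_cell :: "(real^3) set" where
  "W_cell = {x. 0 \<le> x$1 + x$3 \<and> x$1 \<le> x$3 \<and> x$3 \<le> x$2 \<and> x$2 + x$3 \<le> 1 \<and>
     5/16 \<le> x$2 + x$3/2 \<and> x$2 - x$3/2 \<le> 11/16 \<and> x$1 + x$3/2 \<le> 7/16 \<and> x$3/2 - x$1 \<le> 7/16}"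

lemma permutes_UNIV_3:
  assumes "p permutes (UNIV :: 3 set)"
  shows "(p 1, p 2, p 3) \<in> {(1, 2, 3), (1, 3, 2), (2, 1, 3), (2, 3, 1), (3, 1, 2), (3, 2, 1)}"
proof -
  have "p 1 \<noteq> p 2" "p 1 \<noteq> p 3" "p 2 \<noteq> p 3"
    using permutes_inj[OF assms] by (simp_all add: inj_eq)
  then show ?thesis using exhaust_3[of "p 1"] exhaust_3[of "p 2"] exhaust_3[of "p 3"] by auto
qed

lemma atLeastAtMost_int_rec: "{i..j::int} = (if i \<le> j then insert i {i + 1..j} else {})"
  by auto

lemma W_cell_subset_voronoi_cell: "W_cell \<subseteq> voronoi_cell L2_unit w0"
proof (intro subsetI, unfold voronoi_cell_def, intro CollectI ballI)
  fix x q assume x: "x \<in> W_cell" and q: "q \<in> L2_unit"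
  from x have facets: "0 \<le> x$1 + x$3" "x$1 \<le> x$3" "x$3 \<le> x$2" "x$2 + x$3 \<le> 1"
     "5/16 \<le> x$2 + x$3/2" "x$2 - x$3/2 \<le> 11/16" "x$1 + x$3/2 \<le> 7/16" "x$3/2 - x$1 \<le> 7/16"
    unfolding W_cell_def by auto
  then have bounds: "-7/24 \<le> x$1" "x$1 \<le> 7/24" "5/24 \<le> x$2" "x$2 \<le> 19/24" "0 \<le> x$3" "x$3 \<le> 1/2"
    by linarith+
  note candidates = forall_3 forall_vector_3 atLeastAtMost_int_rec imp_conjL all_conj_distrib
    dist_le_dist_iff_inner inner_vec_def sum_3 w0_def
  (* Coordinate i of q lies in the coset (d$i + \<int>) / s$i, and [lo$i, hi$i] is the smallest range
     of coset indices enclosing the bounds of x$i. *)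
  have ZZZ: "dist x w0 \<le> dist x q" if "\<forall>i. q$i \<in> \<int>"
    by (rule dist_le_by_box_candidates[where s = "vector [1, 1, 1]" and d = "0"
          and lo = "vector [-1, 0, 0]" and hi = "vector [1, 1, 1]"])
       ((use that in \<open>simp_all add: candidates\<close>), (use bounds facets in \<open>(intro conjI; linarith)+\<close>))
  have HHH: "dist x w0 \<le> dist x q" if "\<forall>i. q$i - 1/2 \<in> \<int>"
    by (rule dist_le_by_box_candidates[where s = "vector [1, 1, 1]" and d = "vector [1/2, 1/2, 1/2]"
          and lo = "vector [-1, -1, -1]" and hi = "vector [0, 1, 0]"])
       ((use that in \<open>simp_all add: candidates\<close>), (use bounds facets in \<open>(intro conjI; linarith)+\<close>))
  have ZHQ: "dist x w0 \<le> dist x q" if "q$1 \<in> \<int>" "q$2 - 1/2 \<in> \<int>" "2 * q$3 - 1/2 \<in> \<int>"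
    by (rule dist_le_by_box_candidates[where s = "vector [1, 1, 2]" and d = "vector [0, 1/2, 1/2]"
          and lo = "vector [-1, -1, -1]" and hi = "vector [1, 1, 1]"])
       ((use that in \<open>simp_all add: candidates\<close>), (use bounds facets in \<open>(intro conjI; linarith)+\<close>))
  have ZQH: "dist x w0 \<le> dist x q" if "q$1 \<in> \<int>" "q$3 - 1/2 \<in> \<int>" "2 * q$2 - 1/2 \<in> \<int>"
    by (rule dist_le_by_box_candidates[where s = "vector [1, 2, 1]" and d = "vector [0, 1/2, 1/2]"
          and lo = "vector [-1, -1, -1]" and hi = "vector [1, 2, 0]"])
       ((use that in \<open>simp_all add: candidates\<close>), (use bounds facets in \<open>(intro conjI; linarith)+\<close>))
  have HZQ: "dist x w0 \<le> dist x q" if "q$2 \<in> \<int>" "q$1 - 1/2 \<in> \<int>" "2 * q$3 - 1/2 \<in> \<int>"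
    by (rule dist_le_by_box_candidates[where s = "vector [1, 1, 2]" and d = "vector [1/2, 0, 1/2]"
          and lo = "vector [-1, 0, -1]" and hi = "vector [0, 1, 1]"])
       ((use that in \<open>simp_all add: candidates\<close>), (use bounds facets in \<open>(intro conjI; linarith)+\<close>))
  have HQZ: "dist x w0 \<le> dist x q" if "q$3 \<in> \<int>" "q$1 - 1/2 \<in> \<int>" "2 * q$2 - 1/2 \<in> \<int>"
    by (rule dist_le_by_box_candidates[where s = "vector [1, 2, 1]" and d = "vector [1/2, 1/2, 0]"
          and lo = "vector [-1, -1, 0]" and hi = "vector [0, 2, 1]"])
       ((use that in \<open>simp_all add: candidates\<close>), (use bounds facets in \<open>(intro conjI; linarith)+\<close>))
  have QZH: "dist x w0 \<le> dist x q" if "q$2 \<in> \<int>" "q$3 - 1/2 \<in> \<int>" "2 * q$1 - 1/2 \<in> \<int>"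
    by (rule dist_le_by_box_candidates[where s = "vector [2, 1, 1]" and d = "vector [1/2, 0, 1/2]"
          and lo = "vector [-2, 0, -1]" and hi = "vector [1, 1, 0]"])
       ((use that in \<open>simp_all add: candidates\<close>), (use bounds facets in \<open>(intro conjI; linarith)+\<close>))
  have QHZ: "dist x w0 \<le> dist x q" if "q$3 \<in> \<int>" "q$2 - 1/2 \<in> \<int>" "2 * q$1 - 1/2 \<in> \<int>"
    by (rule dist_le_by_box_candidates[where s = "vector [2, 1, 1]" and d = "vector [1/2, 1/2, 0]"
          and lo = "vector [-2, -1, 0]" and hi = "vector [1, 1, 1]"])
       ((use that in \<open>simp_all add: candidates\<close>), (use bounds facets in \<open>(intro conjI; linarith)+\<close>))
  from q consider "\<forall>i. q$i \<in> \<int>" | "\<forall>i. q$i - 1/2 \<in> \<int>"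
    | p where "p permutes UNIV" "q $ p 1 \<in> \<int>" "q $ p 2 - 1/2 \<in> \<int>" "2 * q $ p 3 - 1/2 \<in> \<int>"
    unfolding L2_unit_def by blast
  then show "dist x w0 \<le> dist x q"
  proof cases
    case (3 p)
    with permutes_UNIV_3[OF \<open>p permutes UNIV\<close>] show ?thesis
      by (auto intro: ZHQ ZQH HZQ HQZ QZH QHZ)
  qed (fact ZZZ HHH)+
qed

lemma voronoi_cell_subset_W_cell: "voronoi_cell L2_unit w0 \<subseteq> W_cell"
proof
  fix x assume x: "x \<in> voronoi_cell L2_unit w0"
  have closer: "2 * (x \<bullet> (q - w0)) \<le> q \<bullet> q - w0 \<bullet> w0" if "q \<in> L2_unit" for q
    using x that unfolding voronoi_cell_def dist_le_dist_iff_inner[symmetric] by blast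
  have "vector [0, 0, 0] \<in> L2_unit" "vector [0, 1, 0] \<in> L2_unit"
    unfolding L2_unit_def by (simp_all add: forall_3)
  moreover have "vector [1/2, 1/2, 1/2] \<in> L2_unit" "vector [-1/2, 1/2, 1/2] \<in> L2_unit"
    unfolding L2_unit_def by (simp_all add: forall_3)
  moreover have "vector [-1/4, 1/2, 0] \<in> L2_unit" "vector [1/4, 1/2, 0] \<in> L2_unit"
    unfolding L2_unit_def by (intro CollectI disjI2 exI[of _ "Transposition.transpose 1 3"]; simp add: permutes_swap_id)+
  moreover have "vector [0, 1/4, 1/2] \<in> L2_unit" "vector [0, 3/4, 1/2] \<in> L2_unit"
    unfolding L2_unit_def by (intro CollectI disjI2 exI[of _ "Transposition.transpose 2 3"]; simp add: permutes_swap_id)+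
  ultimately have "\<forall>q \<in> {vector [0, 0, 0], vector [0, 1, 0], vector [1/2, 1/2, 1/2], vector [-1/2, 1/2, 1/2],
      vector [-1/4, 1/2, 0], vector [1/4, 1/2, 0], vector [0, 1/4, 1/2], vector [0, 3/4, 1/2]}.
      2 * (x \<bullet> (q - w0)) \<le> q \<bullet> q - w0 \<bullet> w0"
    using closer by blast
  then show "x \<in> W_cell"
    unfolding W_cell_def by (simp add: inner_vec_def sum_3 w0_def)
qed

lemma voronoi_cell_L2_unit_w0: "voronoi_cell L2_unit w0 = W_cell"
  using voronoi_cell_subset_W_cell W_cell_subset_voronoi_cell by (rule subset_antisym)

lemma compact_W_cell: "compact W_cell"
proof (rule compact_eq_bounded_closed[THEN iffD2], rule conjI)
  show "bounded W_cell"
    by (rule bounded_subset[OF bounded_cbox[of "vector [-1, -1, -1]" "vector [1, 1, 1]"]])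
       (auto simp: W_cell_def mem_box_cart forall_3)
  show "closed W_cell" unfolding W_cell_def
    by (intro closed_Collect_conj closed_Collect_le continuous_intros) auto
qed

(* The tetrahedron spanned by the Gamma-points 0, (0,1,0), (1/2,1/2,1/2), (-1/2,1/2,1/2). *)
definition Gamma_tetrahedron :: "(real^3) set" where
  "Gamma_tetrahedron = {x. 0 \<le> x$1 + x$3 \<and> x$1 \<le> x$3 \<and> x$3 \<le> x$2 \<and> x$2 + x$3 \<le> 1}"

lemma measure_Gamma_tetrahedron:
  "Gamma_tetrahedron \<in> lmeasurable \<and> measure lebesgue Gamma_tetrahedron = 1/12"
proof -
  have "Gamma_tetrahedron =
      {x. (vector [vector [0, 1, -1], vector [1, 0, 1], vector [-1, 0, 1]] :: real^3^3) *v x + 0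
            \<in> convex hull (insert 0 Basis)}"
    by (auto simp: Gamma_tetrahedron_def std_simplex_cart forall_3 matrix_vector_mult_def sum_3)
  from measure_tetrahedron_3[OF this] show ?thesis by (simp add: det_3)
qed

(* C\<^sub>k is the corner of T cut off by the bisector plane of w0 and the k-th vertex of T. Each row of
   a matrix A below is an affine form vanishing on a face of C\<^sub>k and equal to 1 at the opposite
   vertex, so that C\<^sub>k is the preimage of the standard simplex. *)
lemma measure_W_cell: "W_cell \<in> lmeasurable" "measure lebesgue W_cell = 451/6912"
proof -
  let ?\<Delta> = "convex hull (insert 0 Basis) :: (real^3) set"
  define T where "T = Gamma_tetrahedron"
  define C\<^sub>1 where "C\<^sub>1 = {x \<in> T. x$2 + x$3/2 \<le> 5/16}"
  define C\<^sub>2 where "C\<^sub>2 = {x \<in> T. 11/16 \<le> x$2 - x$3/2}"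
  define C\<^sub>3 where "C\<^sub>3 = {x \<in> T. 7/16 \<le> x$1 + x$3/2}"
  define C\<^sub>4 where "C\<^sub>4 = {x \<in> T. 7/16 \<le> x$3/2 - x$1}"
  note coordinates = T_def Gamma_tetrahedron_def std_simplex_cart forall_3 matrix_vector_mult_def sum_3 det_3
  have corner: "C \<in> lmeasurable \<and> measure lebesgue C = 125/27648"
    if "C = {x. A *v x + b \<in> ?\<Delta>}" and "\<bar>det A\<bar> = 4608/125" for C A b
    using measure_tetrahedron_3[OF that(1)] that(2) by auto
  have plane: "negligible {x. u \<bullet> x = c}" if "u $ 3 \<noteq> 0" for u :: "real^3" and c
    using that by (intro negligible_hyperplane) auto
  have "C\<^sub>1 \<in> lmeasurable \<and> measure lebesgue C\<^sub>1 = 125/27648"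
    by (rule corner[where A = "vector [vector [0, 16/5, -16/5], vector [12/5, 0, 12/5], vector [-12/5, 0, 12/5]]"
          and b = 0]) (auto simp: C\<^sub>1_def coordinates)
  moreover have "C\<^sub>2 \<in> lmeasurable \<and> measure lebesgue C\<^sub>2 = 125/27648"
    by (rule corner[where A = "vector [vector [0, -16/5, -16/5], vector [12/5, 0, 12/5], vector [-12/5, 0, 12/5]]"
          and b = "vector [16/5, 0, 0]"]) (auto simp: C\<^sub>2_def coordinates)
  moreover have "C\<^sub>3 \<in> lmeasurable \<and> measure lebesgue C\<^sub>3 = 125/27648"
    by (rule corner[where A = "vector [vector [-16/5, 0, 16/5], vector [0, -12/5, -12/5], vector [0, 12/5, -12/5]]"
          and b = "vector [0, 12/5, 0]"]) (auto simp: C\<^sub>3_def coordinates)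
  moreover have "C\<^sub>4 \<in> lmeasurable \<and> measure lebesgue C\<^sub>4 = 125/27648"
    by (rule corner[where A = "vector [vector [16/5, 0, 16/5], vector [0, -12/5, -12/5], vector [0, 12/5, -12/5]]"
          and b = "vector [0, 12/5, 0]"]) (auto simp: C\<^sub>4_def coordinates)
  moreover have W_cell: "W_cell \<in> lmeasurable" by (rule lmeasurable_compact[OF compact_W_cell])
  moreover have "negligible (W_cell \<inter> C\<^sub>1)"
    by (rule negligible_subset[OF plane[where u = "vector [0, 1, 1/2]" and c = "5/16"]])
       (auto simp: W_cell_def C\<^sub>1_def inner_vec_def sum_3)
  moreover have "negligible ((W_cell \<union> C\<^sub>1) \<inter> C\<^sub>2)"
    by (rule negligible_subset[OF plane[where u = "vector [0, 1, -1/2]" and c = "11/16"]])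
       (auto simp: W_cell_def T_def Gamma_tetrahedron_def C\<^sub>1_def C\<^sub>2_def inner_vec_def sum_3)
  moreover have "negligible ((W_cell \<union> C\<^sub>1 \<union> C\<^sub>2) \<inter> C\<^sub>3)"
    by (rule negligible_subset[OF plane[where u = "vector [1, 0, 1/2]" and c = "7/16"]])
       (auto simp: W_cell_def T_def Gamma_tetrahedron_def C\<^sub>1_def C\<^sub>2_def C\<^sub>3_def inner_vec_def sum_3)
  moreover have "negligible ((W_cell \<union> C\<^sub>1 \<union> C\<^sub>2 \<union> C\<^sub>3) \<inter> C\<^sub>4)"
    by (rule negligible_subset[OF plane[where u = "vector [-1, 0, 1/2]" and c = "7/16"]])
       (auto simp: W_cell_def T_def Gamma_tetrahedron_def C\<^sub>1_def C\<^sub>2_def C\<^sub>3_def C\<^sub>4_def inner_vec_def sum_3)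
  moreover have "T = W_cell \<union> C\<^sub>1 \<union> C\<^sub>2 \<union> C\<^sub>3 \<union> C\<^sub>4"
    by (auto simp: T_def Gamma_tetrahedron_def W_cell_def C\<^sub>1_def C\<^sub>2_def C\<^sub>3_def C\<^sub>4_def)
  ultimately have "measure lebesgue T = measure lebesgue W_cell + 4 * (125/27648)"
    by (simp add: measure_Un3 negligible_imp_measure0 fmeasurable.Un)
  then show "measure lebesgue W_cell = 451/6912" using measure_Gamma_tetrahedron by (simp add: T_def)
  show "W_cell \<in> lmeasurable" by (fact W_cell)
qed

lemma W_triples_reflect_translate:
  assumes "t \<in> W_triples"
  obtains s c where "s = 1 \<or> s = -1" "\<forall>i. c$i \<in> \<int>" "t = s *\<^sub>R w0 + c"
proof -
  obtain i j k e where e: "e \<in> {1/4, 3/4 :: real}" and t: "t = vector [of_int i, of_int j + 1/2, of_int k + e]"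
    using assms unfolding W_triples_def by blast
  show ?thesis
  proof (cases "e = 1/4")
    case True
    then show ?thesis
      by (intro that[of 1 "vector [of_int i, of_int j, of_int k]"]) (simp_all add: t w0_def vec_eq_iff forall_3)
  next
    case False
    with e show ?thesis
      by (intro that[of "-1" "vector [of_int i, of_int j + 1, of_int k + 1]"]) (simp_all add: t w0_def vec_eq_iff forall_3)
  qed
qed

lemma measure_voronoi_cell_W_set:
  assumes a: "a > 0" and w: "w \<in> W_set a"
  shows "emeasure lebesgue (voronoi_cell (L2_set a) w) = ennreal (451/6912 * a^3)"
proof -
  obtain t p where t: "t \<in> W_triples" and p: "p permutes UNIV" and w_eq: "w = a *\<^sub>R (\<chi> i. t $ p i)"
    using w unfolding W_set_def by blast
  obtain s c where s: "s = 1 \<or> s = -1" and c: "\<forall>i. c$i \<in> \<int>" and t_eq: "t = s *\<^sub>R w0 + c"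
    using W_triples_reflect_translate[OF t] .
  define \<sigma> where "\<sigma> u = (\<chi> i. u $ p i)" for u :: "real^3"
  have \<sigma>: "orthogonal_transformation \<sigma>"
    unfolding \<sigma>_def by (rule orthogonal_transformation_permute_coordinates[OF p])
  have F: "(a * s) *\<^sub>R \<sigma> y + a *\<^sub>R \<sigma> c = a *\<^sub>R \<sigma> (s *\<^sub>R y + c)" for y
    by (simp add: \<sigma>_def vec_eq_iff algebra_simps)
  have "(a * s) *\<^sub>R \<sigma> y + a *\<^sub>R \<sigma> c \<in> L2_set a \<longleftrightarrow> y \<in> L2_unit" for y
  proof -
    have "(a * s) *\<^sub>R \<sigma> y + a *\<^sub>R \<sigma> c \<in> L2_set a \<longleftrightarrow> \<sigma> (s *\<^sub>R y + c) \<in> L2_unit"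
      using a by (simp add: L2_set_iff F)
    also have "\<dots> \<longleftrightarrow> s *\<^sub>R y + c \<in> L2_unit"
      unfolding \<sigma>_def by (rule L2_unit_permute[OF p])
    finally show ?thesis by (simp only: L2_unit_reflect_translate[OF s c])
  qed
  moreover have "w = (a * s) *\<^sub>R \<sigma> w0 + a *\<^sub>R \<sigma> c"
    unfolding F unfolding w_eq t_eq \<sigma>_def ..
  moreover have "a * s \<noteq> 0" using a s by auto
  ultimately have cell: "voronoi_cell (L2_set a) w = (\<lambda>y. (a * s) *\<^sub>R \<sigma> y + a *\<^sub>R \<sigma> c) ` W_cell"
    using voronoi_cell_similarity[OF \<sigma>] by (simp add: voronoi_cell_L2_unit_w0)
  have vol: "measure lebesgue (voronoi_cell (L2_set a) w) = 451/6912 * a^3"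
    unfolding cell measure_similarity_image[OF \<sigma> measure_W_cell(1)] measure_W_cell(2)
    using a s by (auto simp: abs_mult)
  have "voronoi_cell (L2_set a) w \<in> lmeasurable"
    unfolding cell by (rule measurable_similarity_image[OF \<sigma> measure_W_cell(1)])
  from emeasure_eq_measure2[OF this] show ?thesis unfolding vol .
qed

theorem mainTheorem4:
  fixes a :: real
  assumes "a > 0"
  shows "(\<forall>w\<in>W_set a. emeasure lebesgue (voronoi_cell (L2_set a) w) = ennreal (451/6912 * a^3))
         \<and> 2 * (125/1152 * a^3) + 12 * (451/6912 * a^3) = a^3"
  using measure_voronoi_cell_W_set[OF assms] by simp

end
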